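(* Let $D$ be a regular $(v,k,\lambda,\mu)$-PDS in a finite group $G$ with $0<\mu<k$, and assume $\sqrt\Delta$ is an integer. Let $\xi$ be a nonprincipal linear character of $G$ of prime order $p$ with kernel $N$. Then $p\mid k-\xi(D)$, \[|N\cap D|=\frac{k-\xi(D)}{p}+\xi(D),\] and $|Na\cap D|=\frac{k-\xi(D)}{p}$ for every $a\in G\setminus N$.
   Context: A $(v,k,\lambda,\mu)$-PDS in a group $G$ of order $v$ is a $k$-subset $D$ such that every nonidentity element of $D$ is $xy^{-1}$ ($x,y\in D$) in exactly $\lambda$ ways and every nonidentity element of $G\setminus D$ in exactly $\mu$ ways; regular means $D=D^{(-1)}$ and $1\notin D$. $\Delta=(\lambda-\mu)^2+4(k-\mu)$; $\chi(D)=\sum_{d\in D}\chi(d)$. *)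

theory Defs
  imports Complex_Main "HOL-Algebra.Coset" "HOL-Computational_Algebra.Primes"
begin

definition is_PDS :: "('a, 'b) monoid_scheme \<Rightarrow> 'a set \<Rightarrow> nat \<Rightarrow> nat \<Rightarrow> nat \<Rightarrow> nat \<Rightarrow> bool" where
  "is_PDS G D v k lam mu \<longleftrightarrow>
     D \<subseteq> carrier G \<and> card (carrier G) = v \<and> card D = k \<and>
     (\<forall>g \<in> carrier G. g \<noteq> \<one>\<^bsub>G\<^esub> \<longrightarrow>
        card {(x, y). x \<in> D \<and> y \<in> D \<and> x \<otimes>\<^bsub>G\<^esub> inv\<^bsub>G\<^esub> y = g}
          = (if g \<in> D then lam else mu))"

definition regular_PDS :: "('a, 'b) monoid_scheme \<Rightarrow> 'a set \<Rightarrow> nat \<Rightarrow> nat \<Rightarrow> nat \<Rightarrow> nat \<Rightarrow> bool" where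
  "regular_PDS G D v k lam mu \<longleftrightarrow>
     is_PDS G D v k lam mu \<and> (\<lambda>x. inv\<^bsub>G\<^esub> x) ` D = D \<and> \<one>\<^bsub>G\<^esub> \<notin> D"

definition PDS_Delta :: "nat \<Rightarrow> nat \<Rightarrow> nat \<Rightarrow> int" where
  "PDS_Delta k lam mu = (int lam - int mu)^2 + 4 * (int k - int mu)"

definition linear_char :: "('a, 'b) monoid_scheme \<Rightarrow> ('a \<Rightarrow> complex) \<Rightarrow> bool" where
  "linear_char G \<xi> \<longleftrightarrow>
     (\<forall>x \<in> carrier G. \<xi> x \<noteq> 0) \<and>
     (\<forall>x \<in> carrier G. \<forall>y \<in> carrier G. \<xi> (x \<otimes>\<^bsub>G\<^esub> y) = \<xi> x * \<xi> y)"

definition char_order :: "('a, 'b) monoid_scheme \<Rightarrow> ('a \<Rightarrow> complex) \<Rightarrow> nat" where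
  "char_order G \<xi> = (LEAST n. 0 < n \<and> (\<forall>x \<in> carrier G. \<xi> x ^ n = 1))"

definition char_kernel :: "('a, 'b) monoid_scheme \<Rightarrow> ('a \<Rightarrow> complex) \<Rightarrow> 'a set" where
  "char_kernel G \<xi> = {x \<in> carrier G. \<xi> x = 1}"

definition char_sum :: "('a \<Rightarrow> complex) \<Rightarrow> 'a set \<Rightarrow> complex" where
  "char_sum \<xi> D = (\<Sum>d\<in>D. \<xi> d)"

end

theory Submission
  imports Defs "Berlekamp_Zassenhaus.Factor_Bound"
begin

(* For a nonprincipal linear character xi, expanding xi(D) xi(D^(-1)) = xi(D)^2 with the
   difference counts of the PDS gives xi(D)^2 = (k - mu) + (lambda - mu) xi(D), whose roots
   (lambda - mu +- sqrt Delta)/2 are integers when sqrt Delta is; so xi(D) = m is an integer.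
   If xi has prime order p and w is one of its nontrivial values, then xi(D) = sum_{j<p} n_j w^j,
   where n_j counts the elements of D on the coset of the kernel on which xi = w^j.
   As 1 + X + ... + X^(p-1) is irreducible over Q (Eisenstein after X -> X + 1), the only rational
   relations among 1, w, ..., w^(p-1) are multiples of their sum, so n_j - [j = 0] m does not
   depend on j; together with k = sum_j n_j this gives all three claims. *)

section \<open>Irreducibility of the cyclotomic polynomial of prime index\<close>

lemma eisenstein_factor_degree_0_if_not_dvd_coeff_0:
  fixes A B E :: "int poly" and q :: int
  assumes q: "prime q" and E: "A * B = E"
    and dvd_coeff: "\<And>i. i < degree E \<Longrightarrow> q dvd coeff E i"
    and not_dvd_lead: "\<not> q dvd lead_coeff E"
    and not_dvd_B0: "\<not> q dvd coeff B 0"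
  shows "degree B = 0"
proof -
  have "lead_coeff E = lead_coeff A * lead_coeff B"
    using E lead_coeff_mult by metis
  then have not_dvd_lead_A: "\<not> q dvd lead_coeff A"
    using not_dvd_lead by auto
  define r where "r = (LEAST i. \<not> q dvd coeff A i)"
  have not_dvd_r: "\<not> q dvd coeff A r"
    unfolding r_def using not_dvd_lead_A by (rule LeastI)
  have r_le: "r \<le> degree A"
    unfolding r_def using not_dvd_lead_A by (rule Least_le)
  have dvd_below_r: "q dvd coeff A i" if "i < r" for i
    using not_less_Least[OF that[unfolded r_def]] by auto
  have "coeff E r = (\<Sum>i\<le>r. coeff A i * coeff B (r - i))"
    by (simp add: E[symmetric] coeff_mult)
  also have "\<dots> = (\<Sum>i<r. coeff A i * coeff B (r - i)) + coeff A r * coeff B 0"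
    by (simp add: lessThan_Suc_atMost[symmetric])
  finally have "coeff E r = (\<Sum>i<r. coeff A i * coeff B (r - i)) + coeff A r * coeff B 0" .
  moreover have "q dvd (\<Sum>i<r. coeff A i * coeff B (r - i))"
    by (intro dvd_sum) (simp add: dvd_below_r)
  moreover have "\<not> q dvd coeff A r * coeff B 0"
    using not_dvd_r not_dvd_B0 q prime_dvd_mult_iff by blast
  ultimately have "\<not> q dvd coeff E r"
    by (metis dvd_add_right_iff)
  then have "degree E \<le> r"
    using dvd_coeff not_less by blast
  moreover have "degree E = degree A + degree B"
  proof -
    have "A \<noteq> 0" "B \<noteq> 0"
      using E not_dvd_lead by auto
    then show ?thesis
      by (simp add: E[symmetric] degree_mult_eq)
  qed
  ultimately show ?thesis
    using r_le by linarith
qed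

lemma eisenstein_factor_degree_0:
  fixes A B E :: "int poly" and q :: int
  assumes q: "prime q" and E: "A * B = E"
    and "\<And>i. i < degree E \<Longrightarrow> q dvd coeff E i" and "\<not> q dvd lead_coeff E"
    and not_dvd_E0: "\<not> q\<^sup>2 dvd coeff E 0"
  shows "degree A = 0 \<or> degree B = 0"
proof -
  have "\<not> q dvd coeff B 0 \<or> \<not> q dvd coeff A 0"
  proof (rule ccontr)
    assume "\<not> ?thesis"
    then have "q * q dvd coeff A 0 * coeff B 0"
      by (simp add: mult_dvd_mono)
    with not_dvd_E0 show False
      by (simp add: E[symmetric] coeff_mult_0 power2_eq_square)
  qed
  then show ?thesis
  proof
    assume "\<not> q dvd coeff B 0"
    then show ?thesis
      using eisenstein_factor_degree_0_if_not_dvd_coeff_0[OF q E assms(3,4)] by simp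
  next
    assume "\<not> q dvd coeff A 0"
    moreover have "B * A = E"
      using E by (simp add: mult.commute)
    ultimately show ?thesis
      using eisenstein_factor_degree_0_if_not_dvd_coeff_0[OF q _ assms(3,4)] by simp
  qed
qed

(* For prime p this is the cyclotomic polynomial Phi_p. *)
definition geometric_poly :: "nat \<Rightarrow> 'a::comm_ring_1 poly" where
  "geometric_poly n = (\<Sum>i<n. monom 1 i)"

lemma coeff_geometric_poly: "coeff (geometric_poly n) j = (if j < n then 1 else 0)"
  unfolding geometric_poly_def by (simp add: coeff_sum coeff_monom)

lemma degree_geometric_poly:
  assumes "0 < n"
  shows "degree (geometric_poly n :: 'a::comm_ring_1 poly) = n - 1"
proof (rule antisym)
  show "degree (geometric_poly n :: 'a poly) \<le> n - 1"
    by (rule degree_le) (auto simp: coeff_geometric_poly)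
  show "n - 1 \<le> degree (geometric_poly n :: 'a poly)"
    by (rule le_degree) (use assms in \<open>simp add: coeff_geometric_poly\<close>)
qed

lemma geometric_poly_times_X_minus_1: "geometric_poly n * [:-1, 1:] = monom 1 n - 1"
proof -
  have "geometric_poly n * [:-1, 1:] = - geometric_poly n + pCons 0 (geometric_poly n)"
    by simp
  also have "\<dots> = monom 1 n - 1"
    by (rule poly_eqI) (auto simp: coeff_pCons coeff_geometric_poly coeff_monom split: nat.split)
  finally show ?thesis .
qed

lemma poly_geometric_poly_root_unity:
  fixes w :: "'a::idom"
  assumes "w ^ n = 1" "w \<noteq> 1"
  shows "poly (geometric_poly n) w = 0"
proof -
  have "poly (geometric_poly n * [:-1, 1:]) w = poly (monom 1 n - 1) w"
    by (simp only: geometric_poly_times_X_minus_1)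
  then have "poly (geometric_poly n) w * (w - 1) = w ^ n - 1"
    by (simp add: poly_monom algebra_simps)
  with assms show ?thesis by simp
qed

lemma coeff_geometric_poly_pcompose_X_plus_1:
  "coeff (geometric_poly n \<circ>\<^sub>p [:1, 1:] :: 'a::comm_ring_1 poly) j = of_nat (n choose Suc j)"
proof -
  define E :: "'a poly" where "E = geometric_poly n \<circ>\<^sub>p [:1, 1:]"
  have "monom (1::'a) n \<circ>\<^sub>p [:1, 1:] = [:1, 1:] ^ n"
    by (simp add: monom_altdef pcompose_hom.hom_power)
  moreover have "[:-1, 1:] \<circ>\<^sub>p [:1, 1:] = ([:0, 1:] :: 'a poly)"
    by simp
  moreover have "(geometric_poly n * [:-1, 1:]) \<circ>\<^sub>p [:1, 1:] = (monom (1::'a) n - 1) \<circ>\<^sub>p [:1, 1:]"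
    by (simp only: geometric_poly_times_X_minus_1)
  ultimately have E_X: "E * [:0, 1:] = [:1, 1:] ^ n - 1"
    by (simp add: E_def pcompose_mult pcompose_diff)
  have "coeff E j = coeff (E * [:0, 1:]) (Suc j)"
    by (simp add: mult_pCons_right)
  also have "\<dots> = coeff ([:1, 1:] ^ n) (Suc j)"
    unfolding E_X by simp
  also have "\<dots> = of_nat (n choose Suc j)"
  proof (cases "Suc j \<le> n")
    case True
    then show ?thesis
      using coeff_linear_poly_power[of "Suc j" n "1::'a" 1] by simp
  next
    case False
    then show ?thesis
      using degree_linear_power[of "1::'a" n] by (simp add: coeff_eq_0 binomial_eq_0)
  qed
  finally show ?thesis unfolding E_def .
qed

lemma geometric_poly_prime_factor_degree_0:
  fixes A B :: "int poly"
  assumes p: "prime p" and AB: "geometric_poly p = A * B"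
  shows "degree A = 0 \<or> degree B = 0"
proof -
  define X1 :: "int poly" where "X1 = [:1, 1:]"
  define E :: "int poly" where "E = geometric_poly p \<circ>\<^sub>p X1"
  have coeff_E: "coeff E j = int (p choose Suc j)" for j
    unfolding E_def X1_def by (rule coeff_geometric_poly_pcompose_X_plus_1)
  have p2: "2 \<le> p"
    using p prime_ge_2_nat by blast
  have degree_E: "degree E = p - 1"
    unfolding E_def X1_def using p2
    by (simp add: degree_pcompose degree_geometric_poly)
  have "degree (A \<circ>\<^sub>p X1) = 0 \<or> degree (B \<circ>\<^sub>p X1) = 0"
  proof (rule eisenstein_factor_degree_0)
    show "prime (int p)"
      using p by simp
    show "(A \<circ>\<^sub>p X1) * (B \<circ>\<^sub>p X1) = E"
      unfolding E_def AB by (simp add: pcompose_mult)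
    show "int p dvd coeff E i" if "i < degree E" for i
      using that p2 p by (simp add: coeff_E degree_E dvd_choose_prime)
    show "\<not> int p dvd lead_coeff E"
      using p2 by (simp add: coeff_E degree_E)
    show "\<not> (int p)\<^sup>2 dvd coeff E 0"
      using p2 by (simp add: coeff_E power2_eq_square)
  qed
  then show ?thesis
    by (simp add: degree_pcompose X1_def)
qed

lemma irreducible_geometric_poly:
  assumes p: "prime p"
  shows "irreducible (geometric_poly p :: rat poly)"
proof (rule irreducibleI)
  have p2: "2 \<le> p"
    using p prime_ge_2_nat by blast
  then have degree: "degree (geometric_poly p :: rat poly) = p - 1"
    by (simp add: degree_geometric_poly)
  then show nonzero: "(geometric_poly p :: rat poly) \<noteq> 0"
    using p2 by auto
  show "\<not> is_unit (geometric_poly p :: rat poly)"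
    using nonzero degree p2 by (simp add: is_unit_iff_degree)
  fix A B :: "rat poly"
  assume AB: "geometric_poly p = A * B"
  have "map_poly rat_of_int (geometric_poly p) = geometric_poly p"
    by (rule poly_eqI) (simp add: coeff_map_poly coeff_geometric_poly)
  then obtain A' B' :: "int poly" where
    "geometric_poly p = A' * B'" "degree A' = degree A" "degree B' = degree B"
    using rat_to_int_factor[of "geometric_poly p" A B] AB by auto
  then have "degree A = 0 \<or> degree B = 0"
    using geometric_poly_prime_factor_degree_0[OF p] by metis
  moreover have "A \<noteq> 0" "B \<noteq> 0"
    using nonzero AB by auto
  ultimately show "is_unit A \<or> is_unit B"
    by (simp add: is_unit_iff_degree)
qed

interpretation of_rat_poly_hom: map_poly_idom_hom "of_rat :: rat \<Rightarrow> 'a::field_char_0" ..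

lemma of_rat_geometric_poly: "map_poly of_rat (geometric_poly n) = geometric_poly n"
  by (rule poly_eqI) (simp add: coeff_map_poly coeff_geometric_poly)

lemma irreducible_dvd_if_common_root:
  fixes C P :: "rat poly" and w :: "'a::field_char_0"
  assumes C: "irreducible C"
    and root_C: "poly (map_poly of_rat C) w = 0" and root_P: "poly (map_poly of_rat P) w = 0"
  shows "C dvd P"
proof -
  define g where "g = gcd C P"
  have "g = fst (bezout_coefficients C P) * C + snd (bezout_coefficients C P) * P"
    unfolding g_def by (simp add: bezout_coefficients_fst_snd)
  then have root_g: "poly (map_poly of_rat g) w = 0"
    using root_C root_P by (simp add: of_rat_poly_hom.hom_add of_rat_poly_hom.hom_mult)
  have "\<not> is_unit g"
  proof
    assume "is_unit g"
    then obtain c where "g = [:c:]" "c \<noteq> 0"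
      by (metis is_unit_iff_degree degree_eq_zeroE not_is_unit_0 pCons_0_0)
    with root_g show False by simp
  qed
  moreover have "g dvd C"
    by (simp add: g_def)
  ultimately have "C dvd g"
    using irreducibleD'[OF C] by blast
  then show ?thesis
    unfolding g_def by (rule dvd_trans) simp
qed

lemma prime_root_unity_rational_relation:
  fixes w :: "'a::field_char_0" and c :: "nat \<Rightarrow> rat"
  assumes p: "prime p" and w: "w ^ p = 1" "w \<noteq> 1"
    and relation: "(\<Sum>i<p. of_rat (c i) * w ^ i) = 0"
    and i: "i < p"
  shows "c i = c 0"
proof -
  have p2: "2 \<le> p"
    using p prime_ge_2_nat by blast
  define P :: "rat poly" where
    "P = (\<Sum>i<p. monom (c i) i) - smult (c (p - 1)) (geometric_poly p)"
  have coeff_P: "coeff P j = (if j < p then c j - c (p - 1) else 0)" for j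
    unfolding P_def by (simp add: coeff_sum coeff_geometric_poly)
  have "poly (map_poly of_rat P) w
      = (\<Sum>i<p. of_rat (c i) * w ^ i) - of_rat (c (p - 1)) * poly (geometric_poly p) w"
    unfolding P_def
    by (simp add: of_rat_poly_hom.hom_minus of_rat_poly_hom.hom_sum of_rat_hom.map_poly_hom_smult
        of_rat_geometric_poly poly_sum poly_monom)
  also have "\<dots> = 0"
    using relation poly_geometric_poly_root_unity[OF w] by simp
  finally have root_P: "poly (map_poly of_rat P) w = 0" .
  have "degree P < p - 1"
  proof (rule degree_lessI)
    show "P \<noteq> 0 \<or> 0 < p - 1"
      using p2 by simp
    show "\<forall>k\<ge>p - 1. coeff P k = 0"
    proof (intro allI impI)
      fix k
      assume "p - 1 \<le> k"
      then have "k = p - 1 \<or> p \<le> k"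
        by linarith
      then show "coeff P k = 0"
        by (auto simp: coeff_P)
    qed
  qed
  have "P = 0"
  proof (rule ccontr)
    assume "P \<noteq> 0"
    moreover have "geometric_poly p dvd P"
      using irreducible_dvd_if_common_root[OF irreducible_geometric_poly[OF p] _ root_P]
        poly_geometric_poly_root_unity[OF w] by (simp add: of_rat_geometric_poly)
    ultimately have "degree (geometric_poly p :: rat poly) \<le> degree P"
      by (simp add: dvd_imp_degree_le)
    then have "p - 1 \<le> degree P"
      using p2 by (simp add: degree_geometric_poly)
    then show False using \<open>degree P < p - 1\<close> by simp
  qed
  then show ?thesis
    using coeff_P[of i] coeff_P[of 0] i p2 by simp
qed

section \<open>Roots of unity of prime order\<close>

lemma power_gcd_eq_1:
  fixes x :: "'a::monoid_mult"
  assumes m: "x ^ m = 1" and n: "x ^ n = 1"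
  shows "x ^ gcd m n = 1"
proof (cases "m = 0")
  case True
  then show ?thesis using n by simp
next
  case False
  then obtain a b where "m * a = n * b + gcd m n"
    using bezout_nat by blast
  then have "(x ^ m) ^ a = (x ^ n) ^ b * x ^ gcd m n"
    by (simp flip: power_mult power_add)
  then show ?thesis
    using m n by simp
qed

lemma inj_on_power_prime_root_unity:
  fixes w :: "'a::monoid_mult"
  assumes p: "prime p" and w: "w ^ p = 1" "w \<noteq> 1"
  shows "inj_on (\<lambda>i. w ^ i) {..<p}"
proof (rule linorder_inj_onI')
  fix i j
  assume ij: "i \<in> {..<p}" "j \<in> {..<p}" "i < j"
  show "w ^ i \<noteq> w ^ j"
  proof
    assume eq: "w ^ i = w ^ j"
    have "w ^ (j - i) = w ^ p * w ^ (j - i)"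
      using w by simp
    also have "\<dots> = w ^ (p - i) * w ^ j"
      using ij by (simp flip: power_add)
    also have "\<dots> = w ^ (p - i) * w ^ i"
      by (simp add: eq)
    also have "\<dots> = 1"
      using ij w by (simp flip: power_add)
    finally have "w ^ (j - i) = 1" .
    then have "w ^ gcd p (j - i) = 1"
      using power_gcd_eq_1[OF w(1)] by blast
    moreover have "gcd p (j - i) = 1"
    proof -
      have "\<not> p dvd j - i"
        using ij by (auto dest: dvd_imp_le)
      then show ?thesis
        using prime_imp_coprime[OF p] by (simp add: coprime_iff_gcd_eq_1)
    qed
    ultimately have "w ^ 1 = 1"
      by simp
    with w show False
      by simp
  qed
qed

lemma roots_unity_eq_powers:
  fixes w :: complex
  assumes p: "prime p" and w: "w ^ p = 1" "w \<noteq> 1"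
  shows "{z. z ^ p = 1} = (\<lambda>i. w ^ i) ` {..<p}"
proof (rule card_subset_eq[symmetric])
  have "0 < p"
    using p prime_gt_0_nat by blast
  then show "finite {z::complex. z ^ p = 1}"
    by (intro finite_roots_unity) simp
  show "(\<lambda>i. w ^ i) ` {..<p} \<subseteq> {z. z ^ p = 1}"
  proof clarify
    fix i
    have "(w ^ i) ^ p = (w ^ p) ^ i"
      by (metis power_mult mult.commute)
    then show "(w ^ i) ^ p = 1"
      using w by simp
  qed
  show "card ((\<lambda>i. w ^ i) ` {..<p}) = card {z::complex. z ^ p = 1}"
    using card_image[OF inj_on_power_prime_root_unity[OF assms]] card_roots_unity_eq[OF \<open>0 < p\<close>]
    by simp
qed

section \<open>Linear characters and partial difference sets\<close>

lemma Ints_if_quadratic_discriminant_square: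
  fixes S :: "'a::field_char_0" and c l t :: int
  assumes quadratic: "S\<^sup>2 = of_int c + of_int l * S" and square: "t\<^sup>2 = l\<^sup>2 + 4 * c"
  shows "S \<in> \<int>"
proof -
  have "(2 * S - of_int l)\<^sup>2 = 4 * S\<^sup>2 - 4 * of_int l * S + of_int (l\<^sup>2)"
    by (simp add: power2_eq_square algebra_simps)
  also have "\<dots> = of_int (t\<^sup>2)"
    unfolding quadratic square by (simp add: algebra_simps)
  finally have "(2 * S - of_int l)\<^sup>2 = of_int (t\<^sup>2)" .
  then have "(2 * S - of_int (l + t)) * (2 * S - of_int (l - t)) = 0"
    by (simp add: power2_eq_square algebra_simps)
  then have "2 * S = of_int (l + t) \<or> 2 * S = of_int (l - t)"
    by simp
  moreover have "even (l + t)" "even (l - t)"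
  proof -
    have "even (t\<^sup>2) \<longleftrightarrow> even (l\<^sup>2)"
      using square by simp
    then show "even (l + t)" "even (l - t)"
      by auto
  qed
  ultimately obtain n where "2 * S = of_int (2 * n)"
    by (metis evenE)
  then have "S = of_int n"
    by simp
  then show ?thesis
    by simp
qed

lemma square_if_sqrt_Ints:
  assumes "0 \<le> n" "sqrt (real_of_int n) \<in> \<int>"
  shows "\<exists>t. t\<^sup>2 = n"
proof -
  obtain t where "sqrt (real_of_int n) = of_int t"
    using assms(2) Ints_cases by metis
  then have "real_of_int (t\<^sup>2) = real_of_int n"
    using assms(1) by (metis of_int_power of_int_0_le_iff real_sqrt_pow2)
  then show ?thesis
    by (metis of_int_eq_iff)
qed

lemma sum_comp_eq_sum_card_fibres:
  assumes "finite D" "finite T" "g ` D \<subseteq> T"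
  shows "(\<Sum>d\<in>D. f (g d)) = (\<Sum>z\<in>T. of_nat (card {d \<in> D. g d = z}) * f z)"
proof -
  have "(\<Sum>d\<in>D. f (g d)) = (\<Sum>z\<in>T. \<Sum>d\<in>{d \<in> D. g d = z}. f (g d))"
    using sum.group[OF assms, of "\<lambda>d. f (g d)"] by simp
  also have "\<dots> = (\<Sum>z\<in>T. of_nat (card {d \<in> D. g d = z}) * f z)"
    by (intro sum.cong refl) simp
  finally show ?thesis .
qed

context group
begin

lemma linear_char_mult:
  "linear_char G \<xi> \<Longrightarrow> x \<in> carrier G \<Longrightarrow> y \<in> carrier G \<Longrightarrow> \<xi> (x \<otimes> y) = \<xi> x * \<xi> y"
  unfolding linear_char_def by blast

lemma linear_char_one:
  assumes "linear_char G \<xi>"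
  shows "\<xi> \<one> = 1"
proof -
  have "\<xi> \<one> * \<xi> \<one> = \<xi> \<one> * 1" "\<xi> \<one> \<noteq> 0"
    using assms linear_char_mult[OF assms, of \<one> \<one>] unfolding linear_char_def by auto
  then show ?thesis
    by (metis mult_left_cancel)
qed

lemma linear_char_pow:
  assumes "linear_char G \<xi>" "x \<in> carrier G"
  shows "\<xi> (x [^] (n::nat)) = \<xi> x ^ n"
  by (induction n) (simp_all add: assms linear_char_one linear_char_mult)

lemma linear_char_power_char_order:
  assumes \<xi>: "linear_char G \<xi>" and fin: "finite (carrier G)" and x: "x \<in> carrier G"
  shows "\<xi> x ^ char_order G \<xi> = 1"
proof -
  let ?P = "\<lambda>n. 0 < n \<and> (\<forall>x\<in>carrier G. \<xi> x ^ n = 1)"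
  have "?P (Coset.order G)"
    using fin order_gt_0_iff_finite pow_order_eq_1 linear_char_pow[OF \<xi>] linear_char_one[OF \<xi>]
    by metis
  then have "?P (char_order G \<xi>)"
    unfolding char_order_def by (rule LeastI)
  with x show ?thesis
    by blast
qed

lemma sum_linear_char_nonprincipal:
  assumes \<xi>: "linear_char G \<xi>" and fin: "finite (carrier G)"
    and y: "y \<in> carrier G" "\<xi> y \<noteq> 1"
  shows "(\<Sum>x\<in>carrier G. \<xi> x) = 0"
proof -
  have "(\<Sum>x\<in>carrier G. \<xi> x) = (\<Sum>x\<in>carrier G. \<xi> (y \<otimes> x))"
    using sum.reindex[OF inj_on_cmult[OF y(1)], of \<xi>] surj_const_mult[OF y(1)] by simp
  also have "\<dots> = \<xi> y * (\<Sum>x\<in>carrier G. \<xi> x)"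
    by (simp add: sum_distrib_left linear_char_mult[OF \<xi> y(1)])
  finally have "(1 - \<xi> y) * (\<Sum>x\<in>carrier G. \<xi> x) = 0"
    by (simp add: algebra_simps)
  with y(2) show ?thesis
    by simp
qed

lemma r_coset_char_kernel:
  assumes \<xi>: "linear_char G \<xi>" and a: "a \<in> carrier G"
  shows "char_kernel G \<xi> #> a = {x \<in> carrier G. \<xi> x = \<xi> a}"
proof safe
  fix x
  assume "x \<in> char_kernel G \<xi> #> a"
  then obtain h where h: "h \<in> carrier G" "\<xi> h = 1" and x: "x = h \<otimes> a"
    unfolding r_coset_def char_kernel_def by auto
  then show "x \<in> carrier G" "\<xi> x = \<xi> a"
    using a by (simp_all add: linear_char_mult[OF \<xi>])
next
  fix x
  assume x: "x \<in> carrier G" "\<xi> x = \<xi> a"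
  have "\<xi> (x \<otimes> inv a) = \<xi> (a \<otimes> inv a)"
    using x a by (simp only: linear_char_mult[OF \<xi>] inv_closed)
  then have "x \<otimes> inv a \<in> char_kernel G \<xi>"
    using x a by (simp add: char_kernel_def linear_char_one[OF \<xi>])
  moreover have "x = (x \<otimes> inv a) \<otimes> a"
    using x a by (simp add: m_assoc)
  ultimately show "x \<in> char_kernel G \<xi> #> a"
    unfolding r_coset_def by blast
qed

lemma card_differences_eq_one:
  assumes D: "D \<subseteq> carrier G"
  shows "card {(x, y). x \<in> D \<and> y \<in> D \<and> x \<otimes> inv y = \<one>} = card D"
proof -
  have "x \<otimes> inv y = \<one> \<longleftrightarrow> x = y" if "x \<in> carrier G" "y \<in> carrier G" for x y
    using that by (metis inv_closed inv_inv r_inv inv_equality)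
  then have "{(x, y). x \<in> D \<and> y \<in> D \<and> x \<otimes> inv y = \<one>} = (\<lambda>x. (x, x)) ` D"
    using D by auto
  then show ?thesis
    by (simp add: card_image inj_on_def)
qed

lemma char_sum_mult_char_sum_inv:
  assumes \<xi>: "linear_char G \<xi>" and fin: "finite (carrier G)" and D: "D \<subseteq> carrier G"
  shows "char_sum \<xi> D * char_sum \<xi> ((\<lambda>x. inv x) ` D)
    = (\<Sum>g\<in>carrier G. of_nat (card {(x, y). x \<in> D \<and> y \<in> D \<and> x \<otimes> inv y = g}) * \<xi> g)"
proof -
  let ?d = "\<lambda>(x, y). x \<otimes> inv y"
  have finD: "finite D"
    using D fin finite_subset by blast
  have "inj_on (\<lambda>x. inv x) D"
    using D inv_inj inj_on_subset by blast
  then have "char_sum \<xi> ((\<lambda>x. inv x) ` D) = (\<Sum>y\<in>D. \<xi> (inv y))"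
    by (simp add: char_sum_def sum.reindex)
  moreover have "\<xi> x * \<xi> (inv y) = \<xi> (x \<otimes> inv y)" if "x \<in> D" "y \<in> D" for x y
    using that D by (simp add: linear_char_mult[OF \<xi>] subset_iff)
  ultimately have "char_sum \<xi> D * char_sum \<xi> ((\<lambda>x. inv x) ` D) = (\<Sum>z\<in>D \<times> D. \<xi> (?d z))"
    by (simp add: char_sum_def sum_product sum.cartesian_product split_def)
  also have "\<dots> = (\<Sum>g\<in>carrier G. \<Sum>z\<in>{z \<in> D \<times> D. ?d z = g}. \<xi> (?d z))"
    using D finD fin by (intro sum.group[symmetric]) auto
  also have "\<dots> = (\<Sum>g\<in>carrier G. of_nat (card {(x, y). x \<in> D \<and> y \<in> D \<and> x \<otimes> inv y = g}) * \<xi> g)"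
  proof (rule sum.cong[OF refl])
    fix g
    let ?Dg = "{(x, y). x \<in> D \<and> y \<in> D \<and> x \<otimes> inv y = g}"
    have set_eq: "{z \<in> D \<times> D. ?d z = g} = ?Dg"
      by auto
    have "(\<Sum>z\<in>?Dg. \<xi> (?d z)) = (\<Sum>z\<in>?Dg. \<xi> g)"
      by (rule sum.cong) auto
    then show "(\<Sum>z\<in>{z \<in> D \<times> D. ?d z = g}. \<xi> (?d z)) = of_nat (card ?Dg) * \<xi> g"
      unfolding set_eq by simp
  qed
  finally show ?thesis .
qed

lemma char_sum_regular_PDS_square:
  assumes \<xi>: "linear_char G \<xi>" and fin: "finite (carrier G)"
    and y: "y \<in> carrier G" "\<xi> y \<noteq> 1" and PDS: "regular_PDS G D v k lam mu"
  shows "char_sum \<xi> D ^ 2 = of_nat k - of_nat mu + (of_nat lam - of_nat mu) * char_sum \<xi> D"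
proof -
  define N where "N g = card {(x, y). x \<in> D \<and> y \<in> D \<and> x \<otimes> inv y = g}" for g
  have D: "D \<subseteq> carrier G" "card D = k" "(\<lambda>x. inv x) ` D = D" "\<one> \<notin> D"
    and N: "\<And>g. g \<in> carrier G \<Longrightarrow> g \<noteq> \<one> \<Longrightarrow> N g = (if g \<in> D then lam else mu)"
    using PDS unfolding regular_PDS_def is_PDS_def N_def by auto
  let ?G' = "carrier G - {\<one>}"
  have "(\<Sum>g\<in>carrier G. \<xi> g) = \<xi> \<one> + (\<Sum>g\<in>?G'. \<xi> g)"
    by (rule sum.remove[OF fin one_closed])
  then have sum_G': "(\<Sum>g\<in>?G'. \<xi> g) = - 1"
    using sum_linear_char_nonprincipal[OF \<xi> fin y] linear_char_one[OF \<xi>]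
    by (simp add: eq_neg_iff_add_eq_0 add.commute)
  have "char_sum \<xi> D ^ 2 = (\<Sum>g\<in>carrier G. of_nat (N g) * \<xi> g)"
    using char_sum_mult_char_sum_inv[OF \<xi> fin D(1)] D(3) by (simp add: power2_eq_square N_def)
  also have "\<dots> = of_nat (N \<one>) * \<xi> \<one> + (\<Sum>g\<in>?G'. of_nat (N g) * \<xi> g)"
    by (rule sum.remove[OF fin one_closed])
  also have "(\<Sum>g\<in>?G'. of_nat (N g) * \<xi> g)
      = (\<Sum>g\<in>?G'. of_nat mu * \<xi> g + (if g \<in> D then (of_nat lam - of_nat mu) * \<xi> g else 0))"
    by (rule sum.cong) (auto simp: N algebra_simps)
  also have "\<dots> = of_nat mu * (\<Sum>g\<in>?G'. \<xi> g) + (\<Sum>g\<in>?G' \<inter> D. (of_nat lam - of_nat mu) * \<xi> g)"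
    using fin by (simp add: sum.distrib sum_distrib_left sum.inter_restrict)
  also have "?G' \<inter> D = D"
    using D by auto
  also have "(\<Sum>g\<in>D. (of_nat lam - of_nat mu) * \<xi> g) = (of_nat lam - of_nat mu) * char_sum \<xi> D"
    by (simp add: char_sum_def sum_distrib_left)
  also have "N \<one> = k"
    using card_differences_eq_one[OF D(1)] D(2) by (simp add: N_def)
  finally show ?thesis
    using sum_G' linear_char_one[OF \<xi>] by (simp add: algebra_simps)
qed

lemma card_char_fibre_eq:
  assumes \<xi>: "linear_char G \<xi>" and fin: "finite (carrier G)" and D: "D \<subseteq> carrier G"
    and p: "prime p" and root: "\<And>x. x \<in> carrier G \<Longrightarrow> \<xi> x ^ p = 1"
    and y: "y \<in> carrier G" "\<xi> y \<noteq> 1"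
    and m: "char_sum \<xi> D = of_int m"
    and z: "z ^ p = 1" "z \<noteq> 1"
  shows "int (card {d \<in> D. \<xi> d = z}) = int (card {d \<in> D. \<xi> d = 1}) - m"
proof -
  define w where "w = \<xi> y"
  have w: "w ^ p = 1" "w \<noteq> 1"
    using root y by (auto simp: w_def)
  define n where "n z = card {d \<in> D. \<xi> d = z}" for z
  define c where "c i = of_nat (n (w ^ i)) - (if i = 0 then of_int m else 0 :: rat)" for i
  have p0: "0 < p"
    using p prime_gt_0_nat by blast
  have roots: "{z. z ^ p = 1} = (\<lambda>i. w ^ i) ` {..<p}"
    by (rule roots_unity_eq_powers[OF p w])
  have "char_sum \<xi> D = (\<Sum>z\<in>{z. z ^ p = 1}. of_nat (n z) * z)"
    unfolding char_sum_def n_def using D fin root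
    by (intro sum_comp_eq_sum_card_fibres[where f = id, simplified])
      (auto intro: finite_subset finite_roots_unity simp: p0)
  also have "\<dots> = (\<Sum>i<p. of_nat (n (w ^ i)) * w ^ i)"
    unfolding roots using inj_on_power_prime_root_unity[OF p w] by (simp add: sum.reindex)
  finally have char_sum_powers: "char_sum \<xi> D = (\<Sum>i<p. of_nat (n (w ^ i)) * w ^ i)" .
  have "of_rat (c i) * w ^ i = of_nat (n (w ^ i)) * w ^ i - (if i = 0 then of_int m else 0)" for i
    by (simp add: c_def of_rat_diff left_diff_distrib)
  then have "(\<Sum>i<p. of_rat (c i) * w ^ i) = char_sum \<xi> D - of_int m"
    using p0 by (simp add: char_sum_powers sum_subtractf sum.delta)
  then have "(\<Sum>i<p. of_rat (c i) * w ^ i) = 0"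
    using m by simp
  then have c_eq: "c i = c 0" if "i < p" for i
    using prime_root_unity_rational_relation[OF p w] that by blast
  obtain i where i: "i < p" "z = w ^ i"
    using z roots by blast
  with z have "i \<noteq> 0"
    by (metis power_0)
  with c_eq[OF i(1)] i have "rat_of_int (int (n z)) = rat_of_int (int (n 1) - m)"
    by (simp add: c_def)
  then show ?thesis
    unfolding n_def of_int_eq_iff .
qed

lemma card_char_kernel_coset_inter:
  assumes \<xi>: "linear_char G \<xi>" and fin: "finite (carrier G)" and D: "D \<subseteq> carrier G"
    and p: "prime p" and root: "\<And>x. x \<in> carrier G \<Longrightarrow> \<xi> x ^ p = 1"
    and y: "y \<in> carrier G" "\<xi> y \<noteq> 1"
    and m: "char_sum \<xi> D = of_int m"
  shows "int p dvd int (card D) - m \<and>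
    int (card (char_kernel G \<xi> \<inter> D)) = (int (card D) - m) div int p + m \<and>
    (\<forall>a \<in> carrier G - char_kernel G \<xi>.
       int (card ((char_kernel G \<xi> #> a) \<inter> D)) = (int (card D) - m) div int p)"
proof -
  let ?T = "{z :: complex. z ^ p = 1}"
  define q where "q = int (card {d \<in> D. \<xi> d = 1}) - m"
  have p0: "0 < p"
    using p prime_gt_0_nat by blast
  have finT: "finite ?T" and cardT: "card ?T = p"
    using p0 by (simp_all add: finite_roots_unity card_roots_unity_eq)
  have fibre: "int (card {d \<in> D. \<xi> d = z}) = q" if "z \<in> ?T - {1}" for z
    using card_char_fibre_eq[OF assms] that by (simp add: q_def)
  have finD: "finite D"
    using D fin finite_subset by blast
  have "int (card D) = (\<Sum>z\<in>?T. int (card {d \<in> D. \<xi> d = z}))"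
    using sum_comp_eq_sum_card_fibres[OF finD finT, of \<xi> "\<lambda>_. 1 :: int"] D root by auto
  also have "\<dots> = int (card {d \<in> D. \<xi> d = 1}) + (\<Sum>z\<in>?T - {1}. int (card {d \<in> D. \<xi> d = z}))"
    by (rule sum.remove[OF finT]) simp
  also have "(\<Sum>z\<in>?T - {1}. int (card {d \<in> D. \<xi> d = z})) = (\<Sum>z\<in>?T - {1}. q)"
    by (rule sum.cong) (simp_all only: fibre)
  also have "\<dots> = (int p - 1) * q"
    using finT cardT p0 by (simp add: of_nat_diff)
  finally have card_D: "int (card D) - m = int p * q"
    unfolding q_def by (simp add: algebra_simps)
  then have div: "(int (card D) - m) div int p = q"
    using p0 by simp
  have "char_kernel G \<xi> \<inter> D = {d \<in> D. \<xi> d = 1}"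
    using D by (auto simp: char_kernel_def)
  moreover have "int (card ((char_kernel G \<xi> #> a) \<inter> D)) = q"
    if a: "a \<in> carrier G - char_kernel G \<xi>" for a
  proof -
    have "(char_kernel G \<xi> #> a) \<inter> D = {d \<in> D. \<xi> d = \<xi> a}"
      using D a r_coset_char_kernel[OF \<xi>] by auto
    moreover have "\<xi> a \<in> ?T - {1}"
      using a root by (simp add: char_kernel_def)
    ultimately show ?thesis
      using fibre by simp
  qed
  ultimately show ?thesis
    using card_D div by (simp add: q_def)
qed

end

theorem mainTheorem3:
  fixes G :: "('a, 'b) monoid_scheme" and D :: "'a set" and v k lam mu p :: nat
    and \<xi> :: "'a \<Rightarrow> complex"
  assumes "group G" and "finite (carrier G)"
    and "regular_PDS G D v k lam mu"
    and "0 < mu" and "mu < k"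
    and "sqrt (real_of_int (PDS_Delta k lam mu)) \<in> \<int>"
    and "linear_char G \<xi>"
    and "\<exists>x \<in> carrier G. \<xi> x \<noteq> 1"
    and "prime p" and "char_order G \<xi> = p"
  shows "\<exists>m::int. char_sum \<xi> D = of_int m \<and> int p dvd (int k - m) \<and>
           int (card (char_kernel G \<xi> \<inter> D)) = (int k - m) div int p + m \<and>
           (\<forall>a \<in> carrier G - char_kernel G \<xi>.
              int (card ((char_kernel G \<xi> #>\<^bsub>G\<^esub> a) \<inter> D)) = (int k - m) div int p)"
proof -
  (* mu < k only serves to make Delta nonnegative: sqrt of a negative real is -sqrt of its
     absolute value, so otherwise the hypothesis on sqrt Delta would not make Delta a square. *)
  interpret group G by fact
  obtain y where y: "y \<in> carrier G" "\<xi> y \<noteq> 1"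
    using assms(8) by blast
  have D: "D \<subseteq> carrier G" "card D = k"
    using assms(3) unfolding regular_PDS_def is_PDS_def by auto
  have root: "\<xi> x ^ p = 1" if "x \<in> carrier G" for x
    using linear_char_power_char_order[OF assms(7,2) that] assms(10) by simp
  obtain t where t: "t\<^sup>2 = (int lam - int mu)\<^sup>2 + 4 * (int k - int mu)"
    using square_if_sqrt_Ints[of "PDS_Delta k lam mu"] assms(5,6) by (auto simp: PDS_Delta_def)
  have "char_sum \<xi> D ^ 2 = of_int (int k - int mu) + of_int (int lam - int mu) * char_sum \<xi> D"
    using char_sum_regular_PDS_square[OF assms(7,2) y assms(3)] by simp
  then have "char_sum \<xi> D \<in> \<int>"
    using t by (rule Ints_if_quadratic_discriminant_square)
  then obtain m where m: "char_sum \<xi> D = of_int m"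
    by (elim Ints_cases)
  show ?thesis
    using card_char_kernel_coset_inter[OF assms(7,2) D(1) assms(9) root y m] m D(2) by auto
qed

end
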